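(* For every dimension $n\geq 2$ there exists $C>0$ such that for any $0<a<e^{-1}$, $$\int_{\Delta_n\times\Delta_n}\frac{\mathbf{1}_{\{\mathbf{t}(r,s)\in Z_a\}}}{\sqrt{t_1(r,s)(1-t_{2n}(r,s))}}\prod_{i=2}^{2n}\frac{1}{t_i(r,s)-t_{i-1}(r,s)}\,dr\,ds\leq C|\log a|^{C}$$ and $$\int_{\Delta_n\times\Delta_n}\mathbf{1}_{\{\mathbf{t}(r,s)\notin Z_a\}}\,dr\,ds\leq Ca.$$
   Context: $\Delta_n=\{(r_1,\dots,r_n)\in[0,1]^n: r_1<\dots<r_n\}$ with Lebesgue measure. For $(r,s)\in\Delta_n\times\Delta_n$, $\mathbf{t}(r,s)=(t_1(r,s),\dots,t_{2n}(r,s))$ are the elements of $r\cup s$ in increasing order. $Z_a=\{(z_1,\dots,z_{2n}): z_1\geq a,\ 1-z_{2n}\geq a,\ z_j-z_{j-1}\geq a\ \forall 2\leq j\leq 2n\}$. *)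

theory Defs
  imports "HOL-Analysis.Analysis"
begin

text \<open>Points of [0,1]^n are functions on the index set {1..n}; the measure used is
  the product Lebesgue measure PiM {1..n} (\<lambda>_. lborel).\<close>

definition Delta :: "nat \<Rightarrow> (nat \<Rightarrow> real) set" where
  "Delta n = {r. (\<forall>i\<in>{1..n}. 0 \<le> r i \<and> r i \<le> 1) \<and> (\<forall>i\<in>{1..<n}. r i < r (Suc i))}"

definition tpts :: "nat \<Rightarrow> (nat \<Rightarrow> real) \<Rightarrow> (nat \<Rightarrow> real) \<Rightarrow> nat \<Rightarrow> real" where
  "tpts n r s j = sort (map r [1..<Suc n] @ map s [1..<Suc n]) ! (j - 1)"

definition Zset :: "nat \<Rightarrow> real \<Rightarrow> (nat \<Rightarrow> real) set" where
  "Zset n a = {z. z 1 \<ge> a \<and> 1 - z (2*n) \<ge> a \<and> (\<forall>j\<in>{2..2*n}. z j - z (j - 1) \<ge> a)}"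

end

theory Submission
  imports Defs
begin

(* The 2n points are integrated out one at a time against a potential that depends only on the
  multiset X of points placed so far and whose integral over one more point never exceeds its
  current value.

  For the first integral the potential is K^(2n - |X|) times the product of the reciprocals of
  all gaps that X cuts out of [0, 1], the gaps at 0 and 1 included, provided all gaps are at
  least a (and 0 otherwise); this dominates the integrand since 1/sqrt u <= 1/u for u <= 1.
  Inserting y between neighbours p < q replaces 1/(q - p) by 1/((y - p)(q - y)), whose integral
  over the admissible y is at most 2 log(1/a)/(q - p), so K = 4n log(1/a) suffices.

  For the second integral the potential is [X is not a-separated] + 2a(2n + 2)(2n - |X|): a new
  point can destroy separation only by landing within a of 0, 1 or a point of X, a set of
  measure at most 2a(|X| + 2).

  The potentials are not obviously measurable, so Tonelli is only used as the inequality
  "integral over a product <= iterated integral", which holds for every nonnegative function. *)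

lemma nn_integral_measurable_minorant:
  fixes f :: "'a \<Rightarrow> ennreal"
  obtains g where "g \<in> borel_measurable M" "g \<le> f" "integral\<^sup>N M g = integral\<^sup>N M f"
proof -
  let ?S = "{g. simple_function M g \<and> g \<le> f}"
  have "(\<lambda>_. 0) \<in> ?S" by (auto simp: le_fun_def)
  then obtain s :: "nat \<Rightarrow> ennreal"
    where s: "range s \<subseteq> integral\<^sup>S M ` ?S" "Sup (integral\<^sup>S M ` ?S) = (SUP i. s i)"
    using ennreal_Sup_countable_SUP[of "integral\<^sup>S M ` ?S"] by blast
  have "\<forall>i. \<exists>h. simple_function M h \<and> h \<le> f \<and> integral\<^sup>S M h = s i"
  proof
    fix i
    have "s i \<in> integral\<^sup>S M ` ?S" using s(1) by auto
    then show "\<exists>h. simple_function M h \<and> h \<le> f \<and> integral\<^sup>S M h = s i" by auto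
  qed
  then obtain h where h: "\<And>i. simple_function M (h i)" "\<And>i. h i \<le> f" "\<And>i. integral\<^sup>S M (h i) = s i"
    by metis
  define g where "g x = (SUP i. h i x)" for x
  have g_meas: "g \<in> borel_measurable M"
    unfolding g_def using h(1) by (intro borel_measurable_SUP) (auto intro: borel_measurable_simple_function)
  have g_le: "g \<le> f"
    unfolding g_def using h(2) by (auto simp: le_fun_def intro: SUP_least)
  have "integral\<^sup>N M f = (SUP i. s i)" using s(2) by (simp add: nn_integral_def)
  also have "\<dots> \<le> integral\<^sup>N M g"
  proof (rule SUP_least)
    fix i
    have "s i = integral\<^sup>N M (h i)" using h by (simp add: nn_integral_eq_simple_integral)
    also have "\<dots> \<le> integral\<^sup>N M g" unfolding g_def by (intro nn_integral_mono) (auto intro: SUP_upper)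
    finally show "s i \<le> integral\<^sup>N M g" .
  qed
  finally have "integral\<^sup>N M f \<le> integral\<^sup>N M g" .
  moreover have "integral\<^sup>N M g \<le> integral\<^sup>N M f"
    using g_le by (intro nn_integral_mono) (simp add: le_fun_def)
  ultimately show ?thesis
    using that[OF g_meas g_le] by simp
qed

lemma nn_integral_pair_le_iterated:
  assumes "sigma_finite_measure N"
  shows "integral\<^sup>N (M \<Otimes>\<^sub>M N) f \<le> (\<integral>\<^sup>+x. \<integral>\<^sup>+y. f (x, y) \<partial>N \<partial>M)"
proof -
  obtain g where g: "g \<in> borel_measurable (M \<Otimes>\<^sub>M N)" "g \<le> f"
    "integral\<^sup>N (M \<Otimes>\<^sub>M N) g = integral\<^sup>N (M \<Otimes>\<^sub>M N) f"
    by (rule nn_integral_measurable_minorant)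
  have "integral\<^sup>N (M \<Otimes>\<^sub>M N) f = (\<integral>\<^sup>+x. \<integral>\<^sup>+y. g (x, y) \<partial>N \<partial>M)"
    using g(3) sigma_finite_measure.nn_integral_fst[OF assms g(1)] by simp
  also have "\<dots> \<le> (\<integral>\<^sup>+x. \<integral>\<^sup>+y. f (x, y) \<partial>N \<partial>M)"
    using g(2) by (intro nn_integral_mono) (auto simp: le_fun_def)
  finally show ?thesis .
qed

lemma (in product_sigma_finite) product_nn_integral_insert_le:
  assumes "finite I" "i \<notin> I"
  shows "integral\<^sup>N (Pi\<^sub>M (insert i I) M) f \<le> (\<integral>\<^sup>+x. \<integral>\<^sup>+y. f (x(i := y)) \<partial>M i \<partial>Pi\<^sub>M I M)"
proof -
  obtain g where g: "g \<in> borel_measurable (Pi\<^sub>M (insert i I) M)" "g \<le> f"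
    "integral\<^sup>N (Pi\<^sub>M (insert i I) M) g = integral\<^sup>N (Pi\<^sub>M (insert i I) M) f"
    by (rule nn_integral_measurable_minorant)
  have "integral\<^sup>N (Pi\<^sub>M (insert i I) M) f = (\<integral>\<^sup>+x. \<integral>\<^sup>+y. g (x(i := y)) \<partial>M i \<partial>Pi\<^sub>M I M)"
    using g(3) product_nn_integral_insert[OF assms g(1)] by simp
  also have "\<dots> \<le> (\<integral>\<^sup>+x. \<integral>\<^sup>+y. f (x(i := y)) \<partial>M i \<partial>Pi\<^sub>M I M)"
    using g(2) by (intro nn_integral_mono) (auto simp: le_fun_def)
  finally show ?thesis .
qed

lemma (in product_sigma_finite) nn_integral_PiM_image_mset_le:
  fixes \<Phi> :: "'a multiset \<Rightarrow> ennreal"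
  assumes step: "\<And>i X. size X < m \<Longrightarrow> (\<integral>\<^sup>+y. \<Phi> (add_mset y X) \<partial>M i) \<le> \<Phi> X"
    and I: "finite I" "card I + size X \<le> m"
  shows "(\<integral>\<^sup>+x. \<Phi> (image_mset x (mset_set I) + X) \<partial>Pi\<^sub>M I M) \<le> \<Phi> X"
  using I
proof (induction I rule: finite_induct)
  case empty
  then show ?case by (simp add: PiM_empty nn_integral_count_space_finite)
next
  case (insert i I)
  have "(\<integral>\<^sup>+x. \<Phi> (image_mset x (mset_set (insert i I)) + X) \<partial>Pi\<^sub>M (insert i I) M)
      \<le> (\<integral>\<^sup>+x. \<integral>\<^sup>+y. \<Phi> (image_mset (x(i := y)) (mset_set (insert i I)) + X) \<partial>M i \<partial>Pi\<^sub>M I M)"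
    using insert.hyps by (rule product_nn_integral_insert_le)
  also have "\<dots> = (\<integral>\<^sup>+x. \<integral>\<^sup>+y. \<Phi> (add_mset y (image_mset x (mset_set I) + X)) \<partial>M i \<partial>Pi\<^sub>M I M)"
  proof -
    have "image_mset (x(i := y)) (mset_set I) = image_mset x (mset_set I)" for x :: "'i \<Rightarrow> 'a" and y
      using insert.hyps by (intro image_mset_cong) auto
    with insert.hyps show ?thesis by simp
  qed
  also have "\<dots> \<le> (\<integral>\<^sup>+x. \<Phi> (image_mset x (mset_set I) + X) \<partial>Pi\<^sub>M I M)"
    using insert by (intro nn_integral_mono step) simp
  also have "\<dots> \<le> \<Phi> X"
    using insert by simp
  finally show ?case .
qed

lemma (in product_sigma_finite) nn_integral_PiM_pair_image_mset_le:
  fixes \<Phi> :: "'a multiset \<Rightarrow> ennreal"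
  assumes step: "\<And>i X. size X < m \<Longrightarrow> (\<integral>\<^sup>+y. \<Phi> (add_mset y X) \<partial>M i) \<le> \<Phi> X"
    and IJ: "finite I" "finite J" "card I + card J \<le> m"
  shows "(\<integral>\<^sup>+rs. \<Phi> (image_mset (fst rs) (mset_set I) + image_mset (snd rs) (mset_set J))
           \<partial>(Pi\<^sub>M I M \<Otimes>\<^sub>M Pi\<^sub>M J M)) \<le> \<Phi> {#}"
proof -
  have "(\<integral>\<^sup>+rs. \<Phi> (image_mset (fst rs) (mset_set I) + image_mset (snd rs) (mset_set J))
           \<partial>(Pi\<^sub>M I M \<Otimes>\<^sub>M Pi\<^sub>M J M))
      \<le> (\<integral>\<^sup>+r. \<integral>\<^sup>+s. \<Phi> (image_mset r (mset_set I) + image_mset s (mset_set J)) \<partial>Pi\<^sub>M J M \<partial>Pi\<^sub>M I M)"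
    by (rule order_trans[OF nn_integral_pair_le_iterated[OF sigma_finite[OF IJ(2)]]]) simp
  also have "\<dots> = (\<integral>\<^sup>+r. \<integral>\<^sup>+s. \<Phi> (image_mset s (mset_set J) + image_mset r (mset_set I)) \<partial>Pi\<^sub>M J M \<partial>Pi\<^sub>M I M)"
    by (simp add: add.commute)
  also have "\<dots> \<le> (\<integral>\<^sup>+r. \<Phi> (image_mset r (mset_set I)) \<partial>Pi\<^sub>M I M)"
    using IJ by (intro nn_integral_mono nn_integral_PiM_image_mset_le[OF step]) auto
  also have "\<dots> \<le> \<Phi> {#}"
    using nn_integral_PiM_image_mset_le[OF step IJ(1), where X = "{#}"] IJ(3) by simp
  finally show ?thesis .
qed

lemma lessThan_Suc_conv_ends:
  assumes "1 \<le> m"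
  shows "{..<Suc m} = insert 0 (insert m ((\<lambda>j. j - 1) ` {2..m}))"
proof (intro set_eqI iffI)
  fix i assume "i \<in> {..<Suc m}"
  then show "i \<in> insert 0 (insert m ((\<lambda>j. j - 1) ` {2..m}))"
    by (cases "i = 0 \<or> i = m") (auto intro!: image_eqI[of _ _ "Suc i"])
qed (use assms in auto)

lemma prod_lessThan_Suc_conv_ends:
  fixes f :: "nat \<Rightarrow> 'a::comm_monoid_mult"
  assumes "1 \<le> m"
  shows "(\<Prod>i<Suc m. f i) = f 0 * f m * (\<Prod>j\<in>{2..m}. f (j - 1))"
proof -
  obtain k where m: "m = Suc k" using assms by (cases m) auto
  have "(\<Prod>i<Suc m. f i) = (\<Prod>i<m. f i) * f m"
    by (rule prod.lessThan_Suc)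
  also have "(\<Prod>i<m. f i) = f 0 * (\<Prod>i<k. f (Suc i))"
    unfolding m by (rule prod.lessThan_Suc_shift)
  also have "(\<Prod>i<k. f (Suc i)) = (\<Prod>j\<in>{2..m}. f (j - 1))"
    by (rule prod.reindex_bij_witness[where i = "\<lambda>j. j - 2" and j = "\<lambda>i. i + 2"])
      (auto simp: m intro!: arg_cong[where f = f])
  finally show ?thesis
    by (simp only: mult_ac)
qed

lemma length_sorted_list_of_multiset [simp]: "length (sorted_list_of_multiset X) = size X"
  by (metis mset_sorted_list_of_multiset size_mset)

definition gaps :: "real \<Rightarrow> real list \<Rightarrow> real list" where
  "gaps p zs = map2 (\<lambda>x y. y - x) (p # zs) (zs @ [1])"

definition separated :: "real \<Rightarrow> real \<Rightarrow> real list \<Rightarrow> bool" where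
  "separated a p zs \<longleftrightarrow> (\<forall>g\<in>set (gaps p zs). a \<le> g)"

definition gap_weight :: "real \<Rightarrow> real \<Rightarrow> real list \<Rightarrow> real" where
  "gap_weight a p zs = (if separated a p zs then (\<Prod>g\<leftarrow>gaps p zs. 1 / g) else 0)"

lemma gaps_Nil [simp]: "gaps p [] = [1 - p]"
  by (simp add: gaps_def)

lemma gaps_Cons [simp]: "gaps p (z # zs) = (z - p) # gaps z zs"
  by (simp add: gaps_def)

lemma length_gaps [simp]: "length (gaps p zs) = Suc (length zs)"
  by (simp add: gaps_def)

lemma nth_gaps: "i \<le> length zs \<Longrightarrow> gaps p zs ! i = (zs @ [1]) ! i - (p # zs) ! i"
  by (simp add: gaps_def)

lemma nth_gaps_ends:
  assumes "length zs = m" "1 \<le> m"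
  shows "gaps p zs ! 0 = zs ! 0 - p"
    and "gaps p zs ! m = 1 - zs ! (m - 1)"
    and "\<forall>j\<in>{2..m}. gaps p zs ! (j - 1) = zs ! (j - 1) - zs ! (j - 1 - 1)"
  using assms by (auto simp: nth_gaps nth_append nth_Cons')

lemma sum_list_gaps: "sum_list (gaps p zs) = 1 - p"
  by (induction zs arbitrary: p) auto

lemma separated_Nil [simp]: "separated a p [] \<longleftrightarrow> a \<le> 1 - p"
  by (simp add: separated_def)

lemma separated_Cons [simp]: "separated a p (z # zs) \<longleftrightarrow> a \<le> z - p \<and> separated a z zs"
  by (simp add: separated_def)

lemma gap_weight_Nil [simp]: "gap_weight a p [] = (if a \<le> 1 - p then 1 / (1 - p) else 0)"
  by (simp add: gap_weight_def)

lemma gap_weight_Cons [simp]: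
  "gap_weight a p (z # zs) = (if a \<le> z - p then 1 / (z - p) * gap_weight a z zs else 0)"
  by (simp add: gap_weight_def)

lemma gap_weight_nonneg: "0 < a \<Longrightarrow> 0 \<le> gap_weight a p zs"
  by (induction zs arbitrary: p) auto

lemma gap_weight_nonzero_imp_le: "0 < a \<Longrightarrow> gap_weight a p zs \<noteq> 0 \<Longrightarrow> p \<le> 1 - a"
  by (induction zs arbitrary: p) (force split: if_splits)+

lemma separated_gaps_le:
  assumes "separated a p zs" "0 \<le> a" "g \<in> set (gaps p zs)"
  shows "g \<le> 1 - p"
proof -
  have "g \<le> sum_list (gaps p zs)"
    using assms by (intro member_le_sum_list) (auto simp: separated_def intro: order_trans)
  then show ?thesis by (simp add: sum_list_gaps)
qed

lemma separated_insort_imp_near: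
  assumes "separated a p zs" "\<not> separated a p (insort y zs)" "p \<le> y" "y \<le> 1"
  shows "\<exists>x\<in>insert p (insert 1 (set zs)). \<bar>y - x\<bar> < a"
  using assms
proof (induction zs arbitrary: p)
  case (Cons z zs)
  show ?case
  proof (cases "y \<le> z")
    case False
    with Cons.prems have "separated a z zs" "\<not> separated a z (insort y zs)" by auto
    from Cons.IH[OF this] False Cons.prems(4) show ?thesis by auto
  qed (use Cons.prems in auto)
qed auto

lemma measurable_gap_weight_insort [measurable]:
  "(\<lambda>y. gap_weight a p (insort y zs)) \<in> borel_measurable borel"
proof (induction zs arbitrary: p)
  case Nil
  have "(\<lambda>y. gap_weight a p (insort y [])) =
      (\<lambda>y. if a \<le> y - p then 1 / (y - p) * (if a \<le> 1 - y then 1 / (1 - y) else 0) else 0)"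
    by (auto simp: fun_eq_iff)
  also have "\<dots> \<in> borel_measurable borel" by measurable
  finally show ?case .
next
  case (Cons z zs)
  have "(\<lambda>y. gap_weight a p (insort y (z # zs))) = (\<lambda>y. if y \<le> z then
      (if a \<le> y - p then 1 / (y - p) * (if a \<le> z - y then 1 / (z - y) * gap_weight a z zs else 0) else 0)
      else (if a \<le> z - p then 1 / (z - p) * gap_weight a z (insort y zs) else 0))"
    by (auto simp: fun_eq_iff)
  also have "\<dots> \<in> borel_measurable borel"
    using Cons.IH[of z] by measurable
  finally show ?case .
qed

lemma nn_integral_reciprocal_distances:
  assumes a: "0 < a" and pq: "q - p \<le> 1"
  shows "(\<integral>\<^sup>+y. ennreal (if a \<le> y - p \<and> a \<le> q - y then 1 / ((y - p) * (q - y)) else 0) \<partial>lborel)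
     \<le> ennreal (2 * ln (1 / a) * (if a \<le> q - p then 1 / (q - p) else 0))"
proof (cases "2 * a \<le> q - p")
  case False
  then have "(\<integral>\<^sup>+y. ennreal (if a \<le> y - p \<and> a \<le> q - y then 1 / ((y - p) * (q - y)) else 0) \<partial>lborel) = 0"
    by (simp add: nn_integral_0_iff_AE)
  then show ?thesis by simp
next
  case True
  define F where "F y = (ln (y - p) - ln (q - y)) / (q - p)" for y
  define h where "h y = 1 / ((y - p) * (q - y))" for y
  have "(F has_real_derivative h y) (at y within {p+a..q-a})" if "y \<in> {p+a..q-a}" for y
  proof -
    have pos: "y - p > 0" "q - y > 0" "q - p > 0" using that a by auto
    have "(F has_real_derivative (1 / (y - p) + 1 / (q - y)) / (q - p)) (at y)"
      unfolding F_def using pos by (auto intro!: derivative_eq_intros)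
    moreover have "1 / (y - p) + 1 / (q - y) = (q - p) * h y"
      using pos by (simp add: h_def field_simps)
    ultimately show ?thesis using pos by (simp add: has_field_derivative_at_within)
  qed
  then have "(h has_integral (F (q - a) - F (p + a))) {p+a..q-a}"
    using True a by (intro fundamental_theorem_of_calculus)
      (auto simp: has_real_derivative_iff_has_vector_derivative[symmetric])
  moreover have "F (q - a) - F (p + a) = 2 * (ln (q - p - a) - ln a) / (q - p)"
    by (simp add: F_def diff_divide_distrib[symmetric] algebra_simps)
  ultimately have int: "(h has_integral 2 * (ln (q - p - a) - ln a) / (q - p)) {p+a..q-a}"
    by simp
  have "ln (q - p - a) \<le> 0" using True a pq by simp
  then have "2 * (ln (q - p - a) - ln a) \<le> 2 * ln (1 / a)" using a by (simp add: ln_div)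
  then have le: "2 * (ln (q - p - a) - ln a) / (q - p) \<le> 2 * ln (1 / a) * (1 / (q - p))"
    using divide_right_mono[of _ _ "q - p"] True a by simp
  have "(\<integral>\<^sup>+y. ennreal (if a \<le> y - p \<and> a \<le> q - y then 1 / ((y - p) * (q - y)) else 0) \<partial>lborel)
      = (\<integral>\<^sup>+y. ennreal (h y) * indicator {p+a..q-a} y \<partial>lborel)"
    by (intro nn_integral_cong) (auto simp: h_def indicator_def)
  also have "\<dots> = ennreal (2 * (ln (q - p - a) - ln a) / (q - p))"
    using a by (intro nn_integral_has_integral_lebesgue'[OF _ int]) (auto simp: h_def)
  also have "\<dots> \<le> ennreal (2 * ln (1 / a) * (if a \<le> q - p then 1 / (q - p) else 0))"
    using le True a by (intro ennreal_leI) auto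
  finally show ?thesis .
qed

lemma nn_integral_gap_weight_insort:
  assumes a: "0 < a" "a \<le> 1" and p: "0 \<le> p"
  shows "(\<integral>\<^sup>+y. ennreal (gap_weight a p (insort y zs)) \<partial>lborel)
           \<le> ennreal (2 * real (Suc (length zs)) * ln (1 / a) * gap_weight a p zs)"
  using p
proof (induction zs arbitrary: p)
  case Nil
  have "(\<integral>\<^sup>+y. ennreal (gap_weight a p (insort y [])) \<partial>lborel)
     = (\<integral>\<^sup>+y. ennreal (if a \<le> y - p \<and> a \<le> 1 - y then 1 / ((y - p) * (1 - y)) else 0) \<partial>lborel)"
    by (intro nn_integral_cong) auto
  also have "\<dots> \<le> ennreal (2 * ln (1 / a) * (if a \<le> 1 - p then 1 / (1 - p) else 0))"
    using Nil a by (intro nn_integral_reciprocal_distances) auto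
  finally show ?case by simp
next
  case (Cons z zs)
  define w where "w = gap_weight a z zs"
  define c where "c = (if a \<le> z - p then 1 / (z - p) else 0)"
  define d where "d y = (if a \<le> y - p \<and> a \<le> z - y then 1 / ((y - p) * (z - y)) else 0)" for y
  have w: "0 \<le> w" and c: "0 \<le> c" and d: "\<And>y. 0 \<le> d y" and L: "0 \<le> ln (1 / a)"
    using a gap_weight_nonneg by (auto simp: w_def c_def d_def)
  have split: "ennreal (gap_weight a p (insort y (z # zs)))
      \<le> ennreal (d y) * ennreal w + ennreal c * ennreal (gap_weight a z (insort y zs))" for y
  proof (cases "y \<le> z")
    case True
    then have "gap_weight a p (insort y (z # zs)) = d y * w" by (auto simp: d_def w_def)
    then show ?thesis using d w by (simp add: ennreal_mult)
  next
    case False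
    then have "gap_weight a p (insort y (z # zs)) = c * gap_weight a z (insort y zs)" by (auto simp: c_def)
    then show ?thesis using c gap_weight_nonneg[OF a(1)] by (simp add: ennreal_mult)
  qed
  have "(\<integral>\<^sup>+y. ennreal (gap_weight a p (insort y (z # zs))) \<partial>lborel)
     \<le> (\<integral>\<^sup>+y. ennreal (d y) * ennreal w + ennreal c * ennreal (gap_weight a z (insort y zs)) \<partial>lborel)"
    using split by (intro nn_integral_mono)
  also have "\<dots> = (\<integral>\<^sup>+y. ennreal (d y) \<partial>lborel) * ennreal w
      + ennreal c * (\<integral>\<^sup>+y. ennreal (gap_weight a z (insort y zs)) \<partial>lborel)"
    unfolding d_def by (simp add: nn_integral_add nn_integral_multc nn_integral_cmult)
  also have "\<dots> \<le> ennreal (2 * ln (1 / a) * c) * ennreal w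
      + ennreal c * ennreal (2 * real (Suc (length zs)) * ln (1 / a) * w)"
  proof (intro add_mono)
    show "(\<integral>\<^sup>+y. ennreal (d y) \<partial>lborel) * ennreal w \<le> ennreal (2 * ln (1 / a) * c) * ennreal w"
    proof (cases "w = 0")
      case False
      then have "z \<le> 1 - a" unfolding w_def using gap_weight_nonzero_imp_le a by blast
      then have "(\<integral>\<^sup>+y. ennreal (d y) \<partial>lborel) \<le> ennreal (2 * ln (1 / a) * c)"
        unfolding d_def c_def using a Cons.prems by (intro nn_integral_reciprocal_distances) auto
      then show ?thesis by (intro mult_right_mono) auto
    qed simp
    show "ennreal c * (\<integral>\<^sup>+y. ennreal (gap_weight a z (insort y zs)) \<partial>lborel)
        \<le> ennreal c * ennreal (2 * real (Suc (length zs)) * ln (1 / a) * w)"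
    proof (cases "a \<le> z - p")
      case True
      then have "0 \<le> z" using a Cons.prems by auto
      from Cons.IH[OF this] show ?thesis unfolding w_def by (intro mult_left_mono) auto
    qed (simp add: c_def)
  qed
  also have "\<dots> = ennreal (2 * real (Suc (length (z # zs))) * ln (1 / a) * (c * w))"
    using c w L by (simp add: ennreal_mult[symmetric] ennreal_plus[symmetric] algebra_simps del: ennreal_plus)
  also have "c * w = gap_weight a p (z # zs)"
    by (simp add: c_def w_def)
  finally show ?case .
qed

definition gap_weight_potential :: "real \<Rightarrow> real \<Rightarrow> nat \<Rightarrow> real multiset \<Rightarrow> ennreal" where
  "gap_weight_potential a K m X = ennreal (gap_weight a 0 (sorted_list_of_multiset X) * K ^ (m - size X))"

definition separation_potential :: "real \<Rightarrow> nat \<Rightarrow> real multiset \<Rightarrow> ennreal" where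
  "separation_potential a m X = (if set_mset X \<subseteq> {0..1}
     then ennreal (of_bool (\<not> separated a 0 (sorted_list_of_multiset X)) + 2 * a * (m + 2) * (m - size X))
     else 0)"

lemma nn_integral_gap_weight_potential_step:
  assumes a: "0 < a" "a \<le> 1" and K: "2 * real m * ln (1 / a) \<le> K" and X: "size X < m"
  shows "(\<integral>\<^sup>+y. gap_weight_potential a K m (add_mset y X) \<partial>lborel) \<le> gap_weight_potential a K m X"
proof -
  define zs where "zs = sorted_list_of_multiset X"
  define w where "w = gap_weight a 0 zs"
  have L: "0 \<le> ln (1 / a)" using a by simp
  have K0: "0 \<le> K" using K L by (smt (verit) mult_nonneg_nonneg of_nat_0_le_iff)
  have w: "0 \<le> w" unfolding w_def using gap_weight_nonneg[OF a(1)] .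
  have "(\<integral>\<^sup>+y. gap_weight_potential a K m (add_mset y X) \<partial>lborel)
      = (\<integral>\<^sup>+y. ennreal (gap_weight a 0 (insort y zs)) \<partial>lborel) * ennreal (K ^ (m - Suc (size X)))"
    using K0 gap_weight_nonneg[OF a(1)]
    by (simp add: gap_weight_potential_def zs_def ennreal_mult nn_integral_multc)
  also have "\<dots> \<le> ennreal (2 * real (Suc (size X)) * ln (1 / a) * w) * ennreal (K ^ (m - Suc (size X)))"
    using nn_integral_gap_weight_insort[OF a order_refl, of zs] by (intro mult_right_mono) (auto simp: zs_def w_def)
  also have "\<dots> \<le> ennreal (K * w * K ^ (m - Suc (size X)))"
  proof -
    have "2 * real (Suc (size X)) * ln (1 / a) \<le> K"
      using K L X by (smt (verit) Suc_leI mult_right_mono mult_left_mono of_nat_le_iff)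
    then show ?thesis
      using w K0 L by (simp add: ennreal_mult[symmetric] mult_right_mono ennreal_leI)
  qed
  also have "\<dots> = ennreal (w * K ^ (m - size X))"
  proof -
    have "m - size X = Suc (m - Suc (size X))" using X by simp
    then show ?thesis by (simp add: mult_ac)
  qed
  finally show ?thesis by (simp add: gap_weight_potential_def w_def zs_def)
qed

lemma nn_integral_separation_potential_step:
  assumes a: "0 < a" and X: "size X < m"
  shows "(\<integral>\<^sup>+y. separation_potential a m (add_mset y X) \<partial>lborel) \<le> separation_potential a m X"
proof (cases "set_mset X \<subseteq> {0..1}")
  case False
  then show ?thesis by (simp add: separation_potential_def)
next
  case True
  define zs where "zs = sorted_list_of_multiset X"
  define b :: real where "b = of_bool (\<not> separated a 0 zs)"
  define c where "c k = 2 * a * (m + 2) * (m - k)" for k :: nat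
  define N where "N = (\<Union>x\<in>set (0 # 1 # zs). {x - a<..<x + a})"
  have b: "0 \<le> b" and c: "\<And>k. 0 \<le> c k" using a by (auto simp: b_def c_def)
  have pointwise: "separation_potential a m (add_mset y X)
      \<le> ennreal (b + c (Suc (size X))) * indicator {0..1} y + indicator N y" for y
  proof (cases "y \<in> {0..1}")
    case y: True
    have "of_bool (\<not> separated a 0 (insort y zs)) \<le> b + indicator N y"
    proof (cases "separated a 0 zs \<and> \<not> separated a 0 (insort y zs)")
      case True
      then have "\<exists>x\<in>set (0 # 1 # zs). \<bar>y - x\<bar> < a"
        using separated_insort_imp_near[of a 0 zs y] y by simp
      then obtain x where x: "x \<in> set (0 # 1 # zs)" "\<bar>y - x\<bar> < a" ..
      then have "y \<in> N" unfolding N_def by (intro UN_I[OF x(1)]) (auto simp: abs_less_iff)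
      then show ?thesis using b by simp
    qed (auto simp: b_def)
    then have "of_bool (\<not> separated a 0 (insort y zs)) + c (Suc (size X))
        \<le> b + c (Suc (size X)) + indicator N y"
      by simp
    moreover have "separation_potential a m (add_mset y X)
        = ennreal (of_bool (\<not> separated a 0 (insort y zs)) + c (Suc (size X)))"
      using True y by (simp add: separation_potential_def zs_def c_def)
    ultimately show ?thesis
      using b c y by (auto simp: indicator_def intro: ennreal_leI)
  qed (auto simp: separation_potential_def)
  have N_meas: "emeasure lborel N \<le> ennreal (2 * a * (size X + 2))"
  proof -
    have "emeasure lborel N \<le> (\<Sum>x\<in>set (0 # 1 # zs). emeasure lborel {x - a<..<x + a})"
      unfolding N_def by (intro emeasure_subadditive_finite) auto
    also have "\<dots> = ennreal (2 * a) * card (set (0 # 1 # zs))"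
      using a by (simp add: ennreal_of_nat_eq_real_of_nat mult.commute)
    also have "\<dots> \<le> ennreal (2 * a) * of_nat (size X + 2)"
      using card_length[of "0 # 1 # zs"] by (intro mult_left_mono of_nat_mono) (auto simp: zs_def)
    finally show ?thesis using a by (simp add: ennreal_mult ennreal_of_nat_eq_real_of_nat)
  qed
  have "(\<integral>\<^sup>+y. separation_potential a m (add_mset y X) \<partial>lborel)
      \<le> (\<integral>\<^sup>+y. ennreal (b + c (Suc (size X))) * indicator {0..1} y + indicator N y \<partial>lborel)"
    using pointwise by (intro nn_integral_mono)
  also have "\<dots> = ennreal (b + c (Suc (size X))) + emeasure lborel N"
  proof -
    have "N \<in> sets lborel" unfolding N_def by (intro sets.finite_UN) auto
    then show ?thesis by (simp add: nn_integral_add nn_integral_cmult_indicator)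
  qed
  also have "\<dots> \<le> ennreal (b + c (Suc (size X)) + 2 * a * (size X + 2))"
    using N_meas b c a by (subst ennreal_plus) (auto intro: add_left_mono)
  also have "\<dots> \<le> ennreal (b + c (size X))"
    using X a by (intro ennreal_leI) (simp add: c_def of_nat_diff algebra_simps)
  also have "\<dots> = separation_potential a m X"
    using True by (simp add: separation_potential_def b_def c_def zs_def)
  finally show ?thesis .
qed

lemma Zset_iff_separated:
  assumes len: "length zs = 2 * n" and n: "1 \<le> n"
  shows "(\<lambda>j. zs ! (j - 1)) \<in> Zset n a \<longleftrightarrow> separated a 0 zs"
proof -
  have "separated a 0 zs \<longleftrightarrow> (\<forall>i\<in>{..<Suc (2 * n)}. a \<le> gaps 0 zs ! i)"
    using len by (auto simp: separated_def all_set_conv_all_nth)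
  also have "\<dots> \<longleftrightarrow> (\<lambda>j. zs ! (j - 1)) \<in> Zset n a"
    using n nth_gaps_ends[OF len, of 0] by (auto simp: lessThan_Suc_conv_ends Zset_def)
  finally show ?thesis ..
qed

lemma integrand_le_gap_weight:
  assumes len: "length zs = 2 * n" and n: "1 \<le> n" and a: "0 < a"
    and t: "t = (\<lambda>j. zs ! (j - 1))"
  shows "indicator (Zset n a) t / sqrt (t 1 * (1 - t (2 * n))) * (\<Prod>i\<in>{2..2 * n}. 1 / (t i - t (i - 1)))
     \<le> gap_weight a 0 zs"
proof (cases "t \<in> Zset n a")
  case False
  then show ?thesis using gap_weight_nonneg[OF a] by simp
next
  case True
  then have sep: "separated a 0 zs" using Zset_iff_separated[OF len n] t by simp
  define g where "g i = gaps 0 zs ! i" for i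
  have g_ge: "a \<le> g i" and g_le: "g i \<le> 1" if "i \<le> 2 * n" for i
    using sep separated_gaps_le[OF sep] that len a unfolding g_def separated_def
    by (auto simp: all_set_conv_all_nth)
  define P where "P = (\<Prod>j\<in>{2..2 * n}. 1 / g (j - 1))"
  have P: "0 \<le> P"
    unfolding P_def
  proof (intro prod_nonneg)
    fix j assume "j \<in> {2..2 * n}"
    then have "a \<le> g (j - 1)" by (intro g_ge) auto
    then show "0 \<le> 1 / g (j - 1)" using a by simp
  qed
  have "gap_weight a 0 zs = (\<Prod>i<Suc (2 * n). 1 / g i)"
    using sep len by (simp add: gap_weight_def g_def prod.list_conv_set_nth atLeast0LessThan)
  also have "\<dots> = 1 / (g 0 * g (2 * n)) * P"
    using n by (simp add: prod_lessThan_Suc_conv_ends P_def del: prod.lessThan_Suc)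
  finally have weight: "gap_weight a 0 zs = 1 / (g 0 * g (2 * n)) * P" .
  have u: "0 < g 0 * g (2 * n)" "g 0 * g (2 * n) \<le> 1"
    using g_ge[of 0] g_ge[of "2 * n"] g_le[of 0] g_le[of "2 * n"] a by (auto intro: mult_le_one)
  have "indicator (Zset n a) t / sqrt (t 1 * (1 - t (2 * n))) * (\<Prod>i\<in>{2..2 * n}. 1 / (t i - t (i - 1)))
      = 1 / sqrt (g 0 * g (2 * n)) * P"
    using True n nth_gaps_ends[OF len, of 0] by (auto simp: t g_def P_def intro!: prod.cong)
  also have "\<dots> \<le> 1 / (g 0 * g (2 * n)) * P"
    using u P by (intro mult_right_mono divide_left_mono real_le_rsqrt)
      (auto simp: power2_eq_square intro: mult_left_le)
  finally show ?thesis using weight by simp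
qed

lemma tpts_eq_nth_sorted_list_of_multiset:
  "tpts n r s = (\<lambda>j. sorted_list_of_multiset (image_mset r (mset_set {1..n}) + image_mset s (mset_set {1..n})) ! (j - 1))"
proof -
  have "mset (map r [1..<Suc n] @ map s [1..<Suc n]) = image_mset r (mset_set {1..n}) + image_mset s (mset_set {1..n})"
    by (simp only: mset_append mset_map mset_upt atLeastLessThanSuc_atLeastAtMost)
  then show ?thesis
    unfolding tpts_def by (metis sorted_list_of_multiset_mset)
qed

lemma nn_integral_Zset_integrand_le:
  assumes n: "1 \<le> n" and a: "0 < a" "a \<le> 1"
  shows "(\<integral>\<^sup>+ rs \<in> Delta n \<times> Delta n.
        ennreal (indicator (Zset n a) (tpts n (fst rs) (snd rs))
          / sqrt (tpts n (fst rs) (snd rs) 1 * (1 - tpts n (fst rs) (snd rs) (2*n)))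
          * (\<Prod>i\<in>{2..2*n}. 1 / (tpts n (fst rs) (snd rs) i - tpts n (fst rs) (snd rs) (i - 1))))
      \<partial>(PiM {1..n} (\<lambda>_. lborel) \<Otimes>\<^sub>M PiM {1..n} (\<lambda>_. lborel)))
      \<le> ennreal ((4 * real n * ln (1 / a)) ^ (2 * n))"
proof -
  interpret product_sigma_finite "\<lambda>_::nat. lborel :: real measure" by standard
  define K where "K = 4 * real n * ln (1 / a)"
  let ?\<Phi> = "gap_weight_potential a K (2 * n)"
  have "(\<integral>\<^sup>+ rs \<in> Delta n \<times> Delta n.
        ennreal (indicator (Zset n a) (tpts n (fst rs) (snd rs))
          / sqrt (tpts n (fst rs) (snd rs) 1 * (1 - tpts n (fst rs) (snd rs) (2*n)))
          * (\<Prod>i\<in>{2..2*n}. 1 / (tpts n (fst rs) (snd rs) i - tpts n (fst rs) (snd rs) (i - 1))))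
      \<partial>(PiM {1..n} (\<lambda>_. lborel) \<Otimes>\<^sub>M PiM {1..n} (\<lambda>_. lborel)))
    \<le> (\<integral>\<^sup>+ rs. ?\<Phi> (image_mset (fst rs) (mset_set {1..n}) + image_mset (snd rs) (mset_set {1..n}))
      \<partial>(PiM {1..n} (\<lambda>_. lborel) \<Otimes>\<^sub>M PiM {1..n} (\<lambda>_. lborel)))"
  proof (intro nn_integral_mono)
    fix rs :: "(nat \<Rightarrow> real) \<times> (nat \<Rightarrow> real)"
    define zs where "zs = sorted_list_of_multiset
      (image_mset (fst rs) (mset_set {1..n}) + image_mset (snd rs) (mset_set {1..n}))"
    have "indicator (Zset n a) (tpts n (fst rs) (snd rs))
          / sqrt (tpts n (fst rs) (snd rs) 1 * (1 - tpts n (fst rs) (snd rs) (2*n)))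
          * (\<Prod>i\<in>{2..2*n}. 1 / (tpts n (fst rs) (snd rs) i - tpts n (fst rs) (snd rs) (i - 1)))
        \<le> gap_weight a 0 zs"
      using n a by (intro integrand_le_gap_weight) (auto simp: zs_def tpts_eq_nth_sorted_list_of_multiset)
    then show "ennreal (indicator (Zset n a) (tpts n (fst rs) (snd rs))
          / sqrt (tpts n (fst rs) (snd rs) 1 * (1 - tpts n (fst rs) (snd rs) (2*n)))
          * (\<Prod>i\<in>{2..2*n}. 1 / (tpts n (fst rs) (snd rs) i - tpts n (fst rs) (snd rs) (i - 1))))
        * indicator (Delta n \<times> Delta n) rs
      \<le> ?\<Phi> (image_mset (fst rs) (mset_set {1..n}) + image_mset (snd rs) (mset_set {1..n}))"
      by (auto simp: gap_weight_potential_def zs_def indicator_def intro: ennreal_leI)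
  qed
  also have "\<dots> \<le> ?\<Phi> {#}"
    using a
    by (intro nn_integral_PiM_pair_image_mset_le nn_integral_gap_weight_potential_step) (auto simp: K_def)
  also have "\<dots> = ennreal (K ^ (2 * n))"
    using a by (simp add: gap_weight_potential_def)
  finally show ?thesis unfolding K_def .
qed

lemma nn_integral_not_Zset_le:
  assumes n: "1 \<le> n" and a: "0 < a" "a \<le> 1"
  shows "(\<integral>\<^sup>+ rs \<in> Delta n \<times> Delta n.
        ennreal (indicator (- Zset n a) (tpts n (fst rs) (snd rs)))
      \<partial>(PiM {1..n} (\<lambda>_. lborel) \<Otimes>\<^sub>M PiM {1..n} (\<lambda>_. lborel)))
      \<le> ennreal (8 * real n * real (n + 1) * a)"
proof -
  interpret product_sigma_finite "\<lambda>_::nat. lborel :: real measure" by standard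
  let ?\<Phi> = "separation_potential a (2 * n)"
  have "(\<integral>\<^sup>+ rs \<in> Delta n \<times> Delta n.
        ennreal (indicator (- Zset n a) (tpts n (fst rs) (snd rs)))
      \<partial>(PiM {1..n} (\<lambda>_. lborel) \<Otimes>\<^sub>M PiM {1..n} (\<lambda>_. lborel)))
    \<le> (\<integral>\<^sup>+ rs. ?\<Phi> (image_mset (fst rs) (mset_set {1..n}) + image_mset (snd rs) (mset_set {1..n}))
      \<partial>(PiM {1..n} (\<lambda>_. lborel) \<Otimes>\<^sub>M PiM {1..n} (\<lambda>_. lborel)))"
  proof (intro nn_integral_mono)
    fix rs :: "(nat \<Rightarrow> real) \<times> (nat \<Rightarrow> real)"
    define X where "X = image_mset (fst rs) (mset_set {1..n}) + image_mset (snd rs) (mset_set {1..n})"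
    show "ennreal (indicator (- Zset n a) (tpts n (fst rs) (snd rs))) * indicator (Delta n \<times> Delta n) rs
      \<le> ?\<Phi> (image_mset (fst rs) (mset_set {1..n}) + image_mset (snd rs) (mset_set {1..n}))"
    proof (cases "rs \<in> Delta n \<times> Delta n \<and> tpts n (fst rs) (snd rs) \<notin> Zset n a")
      case True
      then have "set_mset X \<subseteq> {0..1}"
        by (auto simp: X_def Delta_def)
      moreover have "\<not> separated a 0 (sorted_list_of_multiset X)"
        using True n Zset_iff_separated[of "sorted_list_of_multiset X" n a]
        by (simp add: X_def tpts_eq_nth_sorted_list_of_multiset)
      ultimately have "1 \<le> ?\<Phi> X"
        using a by (simp add: separation_potential_def)
      then show ?thesis
        using True by (simp add: X_def)
    qed auto
  qed
  also have "\<dots> \<le> ?\<Phi> {#}"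
    using a
    by (intro nn_integral_PiM_pair_image_mset_le nn_integral_separation_potential_step) auto
  also have "\<dots> = ennreal (8 * real n * real (n + 1) * a)"
    using a by (simp add: separation_potential_def algebra_simps)
  finally show ?thesis .
qed

lemma mult_power_le_mult_powr:
  fixes L c C :: real
  assumes "1 \<le> L" "0 \<le> c" "c \<le> C" "real k \<le> C"
  shows "c * L ^ k \<le> C * L powr C"
proof -
  have "L ^ k = L powr real k"
    using assms(1) by (simp add: powr_realpow)
  also have "\<dots> \<le> L powr C"
    using assms by (intro powr_mono) auto
  finally show ?thesis
    using assms by (intro mult_mono) auto
qed

theorem mainTheorem10:
  fixes n :: nat
  assumes "n \<ge> 2"
  shows "\<exists>C::real. C > 0 \<and> (\<forall>a::real. 0 < a \<and> a < exp (-1) \<longrightarrow>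
    (\<integral>\<^sup>+ rs \<in> Delta n \<times> Delta n.
        ennreal (indicator (Zset n a) (tpts n (fst rs) (snd rs))
          / sqrt (tpts n (fst rs) (snd rs) 1 * (1 - tpts n (fst rs) (snd rs) (2*n)))
          * (\<Prod>i\<in>{2..2*n}. 1 / (tpts n (fst rs) (snd rs) i - tpts n (fst rs) (snd rs) (i - 1))))
      \<partial>(PiM {1..n} (\<lambda>_. lborel) \<Otimes>\<^sub>M PiM {1..n} (\<lambda>_. lborel)))
      \<le> ennreal (C * \<bar>ln a\<bar> powr C)
    \<and>
    (\<integral>\<^sup>+ rs \<in> Delta n \<times> Delta n.
        ennreal (indicator (- Zset n a) (tpts n (fst rs) (snd rs)))
      \<partial>(PiM {1..n} (\<lambda>_. lborel) \<Otimes>\<^sub>M PiM {1..n} (\<lambda>_. lborel)))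
      \<le> ennreal (C * a))"
proof -
  have n: "1 \<le> n" using assms by simp
  define C :: real where "C = (4 * real n) ^ (2 * n) + 8 * real n * real (n + 1)"
  have C_ge: "(4 * real n) ^ (2 * n) \<le> C" "8 * real n * real (n + 1) \<le> C"
    by (simp_all add: C_def)
  moreover have "real (2 * n) \<le> (4 * real n) ^ (2 * n)"
    using n self_le_power[of "4 * real n" "2 * n"] by simp
  ultimately have C_ge_exponent: "real (2 * n) \<le> C"
    by linarith
  have "(4 * real n * ln (1 / a)) ^ (2 * n) \<le> C * \<bar>ln a\<bar> powr C"
    if a: "0 < a" "a < exp (-1)" for a
  proof -
    have "ln a < -1"
      using a by (metis exp_less_cancel_iff exp_ln)
    then have "ln (1 / a) = \<bar>ln a\<bar>" "1 \<le> \<bar>ln a\<bar>"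
      using a by (auto simp: ln_div)
    then show ?thesis
      using C_ge(1) C_ge_exponent by (simp add: power_mult_distrib mult_power_le_mult_powr)
  qed
  moreover have "8 * real n * real (n + 1) * a \<le> C * a" if "0 < a" for a
    using C_ge(2) that by (intro mult_right_mono) auto
  moreover have "a \<le> 1" if "a < exp (-1)" for a :: real
    using that exp_le_one_iff[of "-1"] by linarith
  moreover have "0 < C"
    using n by (simp add: C_def add_nonneg_pos)
  ultimately show ?thesis
    using nn_integral_Zset_integrand_le[OF n] nn_integral_not_Zset_le[OF n]
    by (intro exI[of _ C]) (meson ennreal_leI order_trans)
qed

end
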